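(* Let $d\leq n$ be natural numbers. Suppose $A\subseteq 2^{[n]}$ satisfies $\mathsf{VC\text{-}dim}(\{S\triangle T \mid S,T\in A\})\leq d$. Then \[ |A| \leq 2\binom{n}{\leq \lfloor d/2\rfloor}. \]
   Context: $[n]=\{1,\dots,n\}$ and $2^{[n]}$ is the family of all subsets of $[n]$; $\triangle$ denotes symmetric difference. For a family $B\subseteq 2^{[n]}$, $\mathsf{VC\text{-}dim}(B)$ is the size of the largest $Y\subseteq[n]$ such that $\{S\cap Y \mid S\in B\}=2^{Y}$. The notation $\binom{n}{\leq k}$ means $\sum_{i=0}^{k}\binom{n}{i}$. *)

theory Defs
  imports Main
begin

definition shatters :: "nat set set \<Rightarrow> nat set \<Rightarrow> bool" where
  "shatters B Y \<longleftrightarrow> {S \<inter> Y | S. S \<in> B} = Pow Y"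

definition vc_dim :: "nat \<Rightarrow> nat set set \<Rightarrow> nat" where
  "vc_dim n B = Max {card Y | Y. Y \<subseteq> {1..n} \<and> shatters B Y}"

definition symdiff :: "'a set \<Rightarrow> 'a set \<Rightarrow> 'a set" where
  "symdiff S T = (S - T) \<union> (T - S)"

definition binom_le :: "nat \<Rightarrow> nat \<Rightarrow> nat" where
  "binom_le n k = (\<Sum>i\<le>k. n choose i)"

end

theory Submission
  imports Defs Complex_Main "HOL-Library.Function_Algebras" "HOL-Library.Indicator_Function"
begin

(* Down-shifting (replace S by S - {i} unless that set is already present) keeps |A| and only
   shrinks the collection of sets shattered by the difference family, so A may be assumed
   downward closed. Then for disjoint S, T in A every P <= S \<union> T is the symmetric difference
   of P \<inter> S and P \<inter> T, so S \<union> T is shattered and |S| + |T| <= d. Hence the members of A of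
   size > d/2 form an intersecting subfamily C. For S in C the functions
   T \<mapsto> [T \<in> A and S \<inter> T = {}] are linearly independent (an alternating sum over the subsets
   of an inclusion-maximal S isolates its coefficient) and, C being intersecting, they are
   supported on A - C. So |C| <= |A - C|, and A - C consists of sets of size <= d/2. *)

definition down_closed :: "'a set set \<Rightarrow> bool" where
  "down_closed A \<longleftrightarrow> (\<forall>S\<in>A. Pow S \<subseteq> A)"

lemma down_closedD: "down_closed A \<Longrightarrow> S \<in> A \<Longrightarrow> T \<subseteq> S \<Longrightarrow> T \<in> A"
  by (auto simp: down_closed_def)

lemma sum_Pow_neg_one_power:
  assumes "finite X" "X \<noteq> {}"
  shows "(\<Sum>T\<in>Pow X. (-1::'b::ring_1) ^ card T) = 0"
  using card_subsupersets_even_odd[of X "{}"] assms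
  by (intro sum_alternating_cancels) (auto simp: Pow_def)

lemma sum_Pow_disjoint_neg_one_power:
  assumes "finite X"
  shows "(\<Sum>T\<in>Pow X. if S \<inter> T = {} then (-1::'b::ring_1) ^ card T else 0) = (if X \<subseteq> S then 1 else 0)"
proof -
  have "{T \<in> Pow X. S \<inter> T = {}} = Pow (X - S)"
    by auto
  then have "(\<Sum>T\<in>Pow X. if S \<inter> T = {} then (-1::'b) ^ card T else 0) = (\<Sum>T\<in>Pow (X - S). (-1) ^ card T)"
    using assms by (simp add: sum.inter_filter [symmetric])
  then show ?thesis
    using assms sum_Pow_neg_one_power[of "X - S"] by (cases "X - S = {}") auto
qed

lemma sum_fun_apply: "(\<Sum>S\<in>F. g S) x = (\<Sum>S\<in>F. g S x :: 'b::comm_monoid_add)"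
  by (induction F rule: infinite_finite_induct) auto

interpretation real_fun: vector_space "\<lambda>(c::real) (f::'a \<Rightarrow> real) x. c * f x"
  by unfold_locales (auto simp: fun_eq_iff algebra_simps)

definition disjoint_indicator :: "'a set set \<Rightarrow> 'a set \<Rightarrow> 'a set \<Rightarrow> real" where
  "disjoint_indicator A S T = (if T \<in> A \<and> S \<inter> T = {} then 1 else 0)"

lemma disjoint_indicator_combination_trivial:
  assumes "finite A" "down_closed A" "C \<subseteq> A"
    and comb: "\<And>X. (\<Sum>S\<in>C. c S * disjoint_indicator A S X) = 0"
  shows "\<forall>S\<in>C. c S = 0"
proof (rule ccontr)
  assume "\<not> (\<forall>S\<in>C. c S = 0)"
  moreover have "finite C"
    using assms(1,3) finite_subset by blast
  ultimately have "finite {S\<in>C. c S \<noteq> 0}" "{S\<in>C. c S \<noteq> 0} \<noteq> {}"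
    by auto
  then obtain S0 where S0: "S0 \<in> C" "c S0 \<noteq> 0" and maximal: "\<And>S. S \<in> C \<Longrightarrow> c S \<noteq> 0 \<Longrightarrow> S0 \<subseteq> S \<Longrightarrow> S = S0"
    using finite_has_maximal[of "{S\<in>C. c S \<noteq> 0}"] by auto
  have "Pow S0 \<subseteq> A"
    using S0 assms(2,3) by (auto simp: down_closed_def)
  then have "finite S0"
    using assms(1) finite_subset by fastforce
  have "0 = (\<Sum>T\<in>Pow S0. (-1) ^ card T * (\<Sum>S\<in>C. c S * disjoint_indicator A S T))"
    by (simp add: comb)
  also have "\<dots> = (\<Sum>S\<in>C. c S * (\<Sum>T\<in>Pow S0. if S \<inter> T = {} then (-1) ^ card T else 0))"
    using \<open>Pow S0 \<subseteq> A\<close>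
    by (auto simp: sum_distrib_left sum.swap[of _ "Pow S0"] disjoint_indicator_def mult_ac
        intro!: sum.cong)
  also have "\<dots> = (\<Sum>S\<in>C. if S = S0 then c S else 0)"
    using maximal by (intro sum.cong) (auto simp: sum_Pow_disjoint_neg_one_power[OF \<open>finite S0\<close>])
  also have "\<dots> = c S0"
    using S0 \<open>finite C\<close> by simp
  finally show False
    using S0 by simp
qed

lemma card_intersecting_le_card_diff:
  assumes "finite A" "down_closed A" "C \<subseteq> A"
    and intersecting: "\<And>S T. S \<in> C \<Longrightarrow> T \<in> C \<Longrightarrow> S \<inter> T \<noteq> {}"
  shows "card C \<le> card (A - C)"
proof -
  let ?r = "disjoint_indicator A"
  have "finite C"
    using assms(1,3) finite_subset by blast
  have inj: "inj_on ?r C"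
  proof (rule inj_onI, rule ccontr)
    fix S T assume "S \<in> C" "T \<in> C" "?r S = ?r T" "S \<noteq> T"
    then obtain x where "x \<in> S - T \<or> x \<in> T - S" "{x} \<in> A"
      using assms(2,3) by (auto intro: down_closedD)
    then have "?r S {x} \<noteq> ?r T {x}"
      by (auto simp: disjoint_indicator_def)
    with \<open>?r S = ?r T\<close> show False
      by simp
  qed
  have independent: "real_fun.independent (?r ` C)"
  proof (rule real_fun.independent_if_scalars_zero)
    fix f g assume "(\<Sum>g\<in>?r ` C. (\<lambda>X. f g * g X)) = 0" "g \<in> ?r ` C"
    then show "f g = 0"
      using disjoint_indicator_combination_trivial[OF assms(1-3), of "f \<circ> ?r"]
      by (auto simp: sum.reindex[OF inj] sum_fun_apply fun_eq_iff)
  qed (use \<open>finite C\<close> in simp)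
  have spanned: "?r ` C \<subseteq> real_fun.span ((\<lambda>T. indicator {T}) ` (A - C))"
  proof
    fix g assume "g \<in> ?r ` C"
    then obtain S where "S \<in> C" "g = ?r S"
      by blast
    let ?F = "{T \<in> A - C. S \<inter> T = {}}"
    have "(\<Sum>T\<in>?F. indicator {T} X) = (if X \<in> ?F then 1 else 0 :: real)" for X
      using assms(1) by (simp add: indicator_def of_bool_def sum.delta)
    then have "g = (\<Sum>T\<in>?F. indicator {T})"
      using \<open>S \<in> C\<close> \<open>g = ?r S\<close> intersecting
      by (auto simp: fun_eq_iff sum_fun_apply disjoint_indicator_def)
    also have "\<dots> \<in> real_fun.span ((\<lambda>T. indicator {T}) ` (A - C))"
      by (intro real_fun.span_sum real_fun.span_base) auto
    finally show "g \<in> real_fun.span ((\<lambda>T. indicator {T}) ` (A - C))" .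
  qed
  have "card (?r ` C) \<le> card ((\<lambda>T. indicator {T}) ` (A - C) :: ('a set \<Rightarrow> real) set)"
    using real_fun.independent_span_bound[OF _ independent spanned] assms(1) by blast
  also have "\<dots> \<le> card (A - C)"
    using assms(1) card_image_le by blast
  finally show ?thesis
    using card_image[OF inj] by simp
qed

lemma shatters_iff: "shatters B Y \<longleftrightarrow> (\<forall>P\<subseteq>Y. \<exists>X\<in>B. X \<inter> Y = P)"
proof -
  have "shatters B Y \<longleftrightarrow> Pow Y \<subseteq> {S \<inter> Y | S. S \<in> B}"
    unfolding shatters_def by blast
  also have "\<dots> \<longleftrightarrow> (\<forall>P\<subseteq>Y. \<exists>X\<in>B. X \<inter> Y = P)"
    by blast
  finally show ?thesis .
qed

lemma symdiff_commute: "symdiff S T = symdiff T S"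
  by (auto simp: symdiff_def)

lemma symdiff_Int_distrib: "symdiff S T \<inter> Y = symdiff (S \<inter> Y) (T \<inter> Y)"
  by (auto simp: symdiff_def)

definition symdiff_family :: "'a set set \<Rightarrow> 'a set set" where
  "symdiff_family A = {symdiff S T | S T. S \<in> A \<and> T \<in> A}"

lemma symdiff_in_symdiff_family: "S \<in> A \<Longrightarrow> T \<in> A \<Longrightarrow> symdiff S T \<in> symdiff_family A"
  unfolding symdiff_family_def by blast

lemma mem_symdiff_family_image:
  "X \<in> symdiff_family (f ` A) \<longleftrightarrow> (\<exists>S\<in>A. \<exists>T\<in>A. X = symdiff (f S) (f T))"
  unfolding symdiff_family_def by blast

definition down_shift :: "'a \<Rightarrow> 'a set set \<Rightarrow> 'a set \<Rightarrow> 'a set" where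
  "down_shift i A S = (if i \<in> S \<and> S - {i} \<notin> A then S - {i} else S)"

lemma down_shift_subset: "down_shift i A S \<subseteq> S"
  by (auto simp: down_shift_def)

lemma inj_on_down_shift: "inj_on (down_shift i A) A"
proof (rule inj_onI)
  fix S T assume "S \<in> A" "T \<in> A" "down_shift i A S = down_shift i A T"
  then show "S = T"
    unfolding down_shift_def by (auto split: if_splits)
qed

lemma down_shift_trace_lift:
  assumes "S \<in> A" "T \<in> A" "i \<in> down_shift i A S" "i \<notin> down_shift i A T" "i \<in> Y" "P \<subseteq> Y"
    and trace: "symdiff (down_shift i A S) (down_shift i A T) \<inter> Y = insert i P"
  shows "\<exists>X\<in>symdiff_family A. X \<inter> Y = P"
proof -
  have S: "down_shift i A S = S" "i \<in> S" "S - {i} \<in> A"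
    using assms(3) by (auto simp: down_shift_def split: if_splits)
  have T: "down_shift i A T = T - {i}"
    using assms(4) by (auto simp: down_shift_def split: if_splits)
  \<comment> \<open>Both S and S - {i} lie in A, so the membership of i in the difference can be chosen.\<close>
  define U where "U = (if i \<in> P \<longleftrightarrow> i \<in> T then S - {i} else S)"
  have "U \<in> A"
    using assms(1) S by (simp add: U_def)
  moreover have "symdiff U T \<inter> Y = P"
  proof (rule set_eqI)
    fix x
    have "x \<in> symdiff S (T - {i}) \<inter> Y \<longleftrightarrow> x \<in> insert i P"
      using trace unfolding S T by simp
    then show "x \<in> symdiff U T \<inter> Y \<longleftrightarrow> x \<in> P"
      using assms(5,6) S(2) by (cases "x = i") (auto simp: U_def symdiff_def)
  qed
  ultimately show ?thesis
    using assms(2) symdiff_in_symdiff_family by blast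
qed

lemma shatters_symdiff_family_down_shift:
  assumes "shatters (symdiff_family (down_shift i A ` A)) Y"
  shows "shatters (symdiff_family A) Y"
  unfolding shatters_iff
proof (intro allI impI)
  fix P assume "P \<subseteq> Y"
  have trace_of: "\<exists>S\<in>A. \<exists>T\<in>A. symdiff (down_shift i A S) (down_shift i A T) \<inter> Y = Q" if "Q \<subseteq> Y" for Q
  proof -
    obtain X where X: "X \<in> symdiff_family (down_shift i A ` A)" "X \<inter> Y = Q"
      using assms \<open>Q \<subseteq> Y\<close> unfolding shatters_iff by blast
    then obtain S T where "S \<in> A" "T \<in> A" "X = symdiff (down_shift i A S) (down_shift i A T)"
      unfolding mem_symdiff_family_image by blast
    with X(2) show ?thesis
      by blast
  qed
  show "\<exists>X\<in>symdiff_family A. X \<inter> Y = P"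
  proof (cases "i \<in> Y")
    case False
    obtain S T where "S \<in> A" "T \<in> A" and trace: "symdiff (down_shift i A S) (down_shift i A T) \<inter> Y = P"
      using trace_of[OF \<open>P \<subseteq> Y\<close>] by blast
    have "down_shift i A U \<inter> Y = U \<inter> Y" for U
      using False by (auto simp: down_shift_def)
    then have "symdiff S T \<inter> Y = P"
      using trace by (simp add: symdiff_Int_distrib)
    then show ?thesis
      using \<open>S \<in> A\<close> \<open>T \<in> A\<close> symdiff_in_symdiff_family by blast
  next
    case True
    obtain S T where "S \<in> A" "T \<in> A"
      and trace: "symdiff (down_shift i A S) (down_shift i A T) \<inter> Y = insert i P"
      using trace_of[of "insert i P"] True \<open>P \<subseteq> Y\<close> by blast
    then have "i \<in> symdiff (down_shift i A S) (down_shift i A T)"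
      by blast
    then consider "i \<in> down_shift i A S" "i \<notin> down_shift i A T" | "i \<in> down_shift i A T" "i \<notin> down_shift i A S"
      by (auto simp: symdiff_def)
    then show ?thesis
    proof cases
      case 1
      then show ?thesis
        using down_shift_trace_lift[OF \<open>S \<in> A\<close> \<open>T \<in> A\<close> _ _ True \<open>P \<subseteq> Y\<close> trace] by blast
    next
      case 2
      then show ?thesis
        using down_shift_trace_lift[OF \<open>T \<in> A\<close> \<open>S \<in> A\<close> _ _ True \<open>P \<subseteq> Y\<close>] trace
        by (simp add: symdiff_commute)
    qed
  qed
qed

lemma down_closed_if_remove_closed:
  assumes finite: "\<And>S. S \<in> A \<Longrightarrow> finite S" and remove: "\<And>S i. S \<in> A \<Longrightarrow> S - {i} \<in> A"
  shows "down_closed A"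
  unfolding down_closed_def
proof (intro ballI subsetI, unfold Pow_iff)
  fix S T assume "S \<in> A" "T \<subseteq> S"
  have shrink: "S - F \<in> A" if "finite F" for F
    using that
  proof (induction F rule: finite_induct)
    case (insert x F)
    have "S - insert x F = (S - F) - {x}"
      by blast
    then show ?case
      using remove[OF insert.IH] by simp
  qed (simp add: \<open>S \<in> A\<close>)
  have "S - (S - T) \<in> A"
    using finite[OF \<open>S \<in> A\<close>] by (intro shrink) simp
  moreover have "S - (S - T) = T"
    using \<open>T \<subseteq> S\<close> by blast
  ultimately show "T \<in> A"
    by simp
qed

lemma sum_card_down_shift_less:
  assumes "finite A" "\<And>S. S \<in> A \<Longrightarrow> finite S" "S \<in> A" "S - {i} \<notin> A"
  shows "(\<Sum>S\<in>down_shift i A ` A. card S) < (\<Sum>S\<in>A. card S)"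
proof -
  have "(\<Sum>S\<in>down_shift i A ` A. card S) = (\<Sum>S\<in>A. card (down_shift i A S))"
    by (simp add: sum.reindex[OF inj_on_down_shift])
  also have "\<dots> < (\<Sum>S\<in>A. card S)"
  proof (rule sum_strict_mono_ex1)
    show "\<forall>S\<in>A. card (down_shift i A S) \<le> card S"
      using card_mono[OF assms(2) down_shift_subset] by blast
    have "i \<in> S"
      using assms(3,4) by (cases "i \<in> S") auto
    then have "down_shift i A S = S - {i}"
      using assms(4) by (simp add: down_shift_def)
    then show "\<exists>S\<in>A. card (down_shift i A S) < card S"
      using card_Diff1_less[OF assms(2)[OF assms(3)] \<open>i \<in> S\<close>] assms(3) by (intro bexI[of _ S]) simp_all
  qed (use assms(1) in simp)
  finally show ?thesis .
qed

lemma exists_down_closed_shifting: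
  assumes "finite U" "A \<subseteq> Pow U"
  shows "\<exists>B. B \<subseteq> Pow U \<and> down_closed B \<and> card B = card A
    \<and> (\<forall>Y. shatters (symdiff_family B) Y \<longrightarrow> shatters (symdiff_family A) Y)"
  using assms(2)
proof (induction "\<Sum>S\<in>A. card S" arbitrary: A rule: less_induct)
  case less
  have "finite A"
    using finite_subset[OF less.prems] assms(1) by simp
  have finite_members: "finite S" if "S \<in> A" for S
    using finite_subset[of S U] less.prems that assms(1) by blast
  show ?case
  proof (cases "\<forall>S\<in>A. \<forall>i. S - {i} \<in> A")
    case True
    then have "down_closed A"
      using finite_members by (intro down_closed_if_remove_closed) auto
    with less.prems show ?thesis
      by (intro exI[of _ A]) simp
  next
    case False
    then obtain S i where "S \<in> A" "S - {i} \<notin> A"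
      by blast
    let ?A' = "down_shift i A ` A"
    have "?A' \<subseteq> Pow U"
      using less.prems down_shift_subset[of i A] by blast
    have "(\<Sum>S\<in>?A'. card S) < (\<Sum>S\<in>A. card S)"
      using sum_card_down_shift_less[OF \<open>finite A\<close> finite_members \<open>S \<in> A\<close> \<open>S - {i} \<notin> A\<close>] .
    from less.hyps[OF this \<open>?A' \<subseteq> Pow U\<close>] obtain B where "B \<subseteq> Pow U" "down_closed B" "card B = card ?A'"
      and "\<forall>Y. shatters (symdiff_family B) Y \<longrightarrow> shatters (symdiff_family ?A') Y"
      by blast
    then show ?thesis
      using card_image[OF inj_on_down_shift] shatters_symdiff_family_down_shift by metis
  qed
qed

lemma shatters_symdiff_family_Un:
  assumes "down_closed A" "S \<in> A" "T \<in> A" "S \<inter> T = {}"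
  shows "shatters (symdiff_family A) (S \<union> T)"
  unfolding shatters_iff
proof (intro allI impI)
  fix P assume "P \<subseteq> S \<union> T"
  have "symdiff (P \<inter> S) (P \<inter> T) \<in> symdiff_family A"
    using assms(1-3) by (intro symdiff_in_symdiff_family) (auto intro: down_closedD)
  moreover have "symdiff (P \<inter> S) (P \<inter> T) \<inter> (S \<union> T) = P"
    using \<open>P \<subseteq> S \<union> T\<close> assms(4) by (auto simp: symdiff_def)
  ultimately show "\<exists>X\<in>symdiff_family A. X \<inter> (S \<union> T) = P"
    by blast
qed

lemma card_le_binom_le:
  assumes "B \<subseteq> Pow {1..n}" "\<And>S. S \<in> B \<Longrightarrow> card S \<le> k"
  shows "card B \<le> binom_le n k"
proof -
  have "B \<subseteq> (\<Union>i\<le>k. {S. S \<subseteq> {1..n} \<and> card S = i})"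
    using assms by auto
  then have "card B \<le> card (\<Union>i\<le>k. {S. S \<subseteq> {1..n} \<and> card S = i})"
    by (intro card_mono) auto
  also have "\<dots> \<le> (\<Sum>i\<le>k. card {S. S \<subseteq> {1..n} \<and> card S = i})"
    by (rule card_UN_le) simp
  also have "\<dots> = binom_le n k"
    by (simp add: binom_le_def n_subsets)
  finally show ?thesis .
qed

lemma card_down_closed_le:
  assumes "down_closed A" "A \<subseteq> Pow {1..n}"
    and shattered: "\<And>Y. Y \<subseteq> {1..n} \<Longrightarrow> shatters (symdiff_family A) Y \<Longrightarrow> card Y \<le> d"
  shows "card A \<le> 2 * binom_le n (d div 2)"
proof -
  define C where "C = {S \<in> A. d div 2 < card S}"
  have "finite A"
    using assms(2) finite_subset by fastforce
  have "S \<inter> T \<noteq> {}" if "S \<in> C" "T \<in> C" for S T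
  proof
    assume "S \<inter> T = {}"
    moreover have "S \<union> T \<subseteq> {1..n}"
      using that assms(2) by (auto simp: C_def)
    ultimately have "card (S \<union> T) \<le> d"
      using that assms(1) by (intro shattered shatters_symdiff_family_Un) (auto simp: C_def)
    moreover have "card (S \<union> T) = card S + card T"
      using \<open>S \<inter> T = {}\<close> \<open>S \<union> T \<subseteq> {1..n}\<close> finite_subset by (intro card_Un_disjoint) auto
    ultimately show False
      using that by (auto simp: C_def)
  qed
  then have "card C \<le> card (A - C)"
    using \<open>finite A\<close> assms(1) by (intro card_intersecting_le_card_diff) (auto simp: C_def)
  moreover have "card (A - C) \<le> binom_le n (d div 2)"
    using assms(2) by (intro card_le_binom_le) (auto simp: C_def)
  moreover have "card A = card C + card (A - C)"
    using \<open>finite A\<close> by (simp add: C_def card_Diff_subset card_mono)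
  ultimately show ?thesis
    by linarith
qed

lemma card_le_vc_dim:
  assumes "Y \<subseteq> {1..n}" "shatters B Y"
  shows "card Y \<le> vc_dim n B"
proof -
  have "{card Y | Y. Y \<subseteq> {1..n} \<and> shatters B Y} \<subseteq> card ` Pow {1..n}"
    by blast
  then have "finite {card Y | Y. Y \<subseteq> {1..n} \<and> shatters B Y}"
    by (rule finite_subset) simp
  with assms show ?thesis
    unfolding vc_dim_def by (intro Max_ge) blast+
qed

theorem theorem1p2:
  fixes n d :: nat and A :: "nat set set"
  assumes "d \<le> n"
    and "A \<subseteq> Pow {1..n}"
    and "vc_dim n {symdiff S T | S T. S \<in> A \<and> T \<in> A} \<le> d"
  shows "card A \<le> 2 * binom_le n (d div 2)"
proof -
  obtain B where "B \<subseteq> Pow {1..n}" "down_closed B" "card B = card A"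
    and shifted: "\<forall>Y. shatters (symdiff_family B) Y \<longrightarrow> shatters (symdiff_family A) Y"
    using exists_down_closed_shifting[OF finite_atLeastAtMost assms(2)] by blast
  have "card Y \<le> d" if "Y \<subseteq> {1..n}" "shatters (symdiff_family B) Y" for Y
    using card_le_vc_dim[OF that(1)] shifted that(2) assms(3) unfolding symdiff_family_def by fastforce
  then show ?thesis
    using card_down_closed_le[OF \<open>down_closed B\<close> \<open>B \<subseteq> Pow {1..n}\<close>] \<open>card B = card A\<close> by simp
qed

end
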